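(* Let $M>0$, $0<a<M$, $\mu>0$, $m\in\mathbb{Z}\setminus\{0\}$, $n\in\{0,1,2,\dots\}$, $l\in\{|m|,|m|+1,\dots\}$, and define $$\alpha_1=\frac{ma}{\mu M^2},\quad \alpha_2=\frac{2n+1}{\mu M}\sqrt{1-\frac{a^2}{M^2}},\quad \alpha=\alpha_1-i\alpha_2,\quad \epsilon=2\sqrt{1-\frac{a^2}{M^2}},\quad \beta=6-\frac{l(l+1)}{\mu^2M^2}.$$ Assume $\beta\geq 0$ and define $$q(z)=z^4+\frac{4z}{\beta+\epsilon}\left[(2+\epsilon)(z^2+1)+\alpha(z^2-1)\right]+2\,\frac{16-\beta+3\epsilon}{\beta+\epsilon}\,z^2+1,\quad z\in\mathbb{C},$$ and $h_1,h_2:\mathbb{R}\to\mathbb{R}$ by $h_1(y)=\mathrm{Re}(q(iy))$, $h_2(y)=\mathrm{Im}(q(iy))$. If $\alpha_1>2+\epsilon$ or $\alpha_1<-(2+\epsilon)$, then $q$ has no purely imaginary roots (roots of the form $iy$, $y\in\mathbb{R}$). Moreover: (i) if $\alpha_1>2+\epsilon$, then $h_2$ is strictly decreasing and $h_2((0,\infty))\subset(-\infty,0)$; (ii) if $\alpha_1<-(2+\epsilon)$, then $h_2$ is strictly increasing and $h_2((0,\infty))\subset(0,\infty)$; (iii) if $0<\beta<8+\epsilon$, then $h_1$ has precisely $2$ positive roots $\bar y_0,\bar y_1$ with $0<\bar y_0<\bar y_1$, and $h_1(y)>0$ for $0\leq y<\bar y_0$, $h_1(y)<0$ for $\bar y_0<y<\bar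 y_1$, and $h_1(y)>0$ for $y>\bar y_1$. *)

theory Defs
  imports "HOL-Analysis.Analysis"
begin

definition qpoly :: "complex \<Rightarrow> real \<Rightarrow> real \<Rightarrow> complex \<Rightarrow> complex" where
  "qpoly \<alpha> \<beta> \<epsilon> z =
     z ^ 4
     + (4 * z / complex_of_real (\<beta> + \<epsilon>)) *
         ((complex_of_real (2 + \<epsilon>)) * (z ^ 2 + 1) + \<alpha> * (z ^ 2 - 1))
     + 2 * complex_of_real ((16 - \<beta> + 3 * \<epsilon>) / (\<beta> + \<epsilon>)) * z ^ 2
     + 1"

end

theory Submission
  imports Defs
begin

(* On the imaginary axis, q(i y) = h\<^sub>1(y) + i h\<^sub>2(y) with a palindromic quartic
   h\<^sub>1(y) = y\<^sup>4 - d y\<^sup>3 - c y\<^sup>2 - d y + 1, where c = 2 (16 - \<beta> + 3 \<epsilon>) / (\<beta> + \<epsilon>) and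
   d = 4 \<alpha>\<^sub>2 / (\<beta> + \<epsilon>) \<ge> 0, and an odd cubic h\<^sub>2(y) = A y + B y\<^sup>3, where
   A = 4 (2 + \<epsilon> - \<alpha>\<^sub>1) / (\<beta> + \<epsilon>) and B = -4 (2 + \<epsilon> + \<alpha>\<^sub>1) / (\<beta> + \<epsilon>).
   If |\<alpha>\<^sub>1| > 2 + \<epsilon>, then A and B are nonzero of the same sign, so h\<^sub>2 is strictly monotone and
   vanishes only at 0, where h\<^sub>1 equals 1.
   The condition \<beta> < 8 + \<epsilon> means c > 2. The quartic then factors as
   (y\<^sup>2 - t y + 1)(y\<^sup>2 - t' y + 1) with t + t' = d and t t' = -(c + 2) < -4, hence t > 2 and t' < 0:
   the first factor has two positive roots y\<^sub>0 < y\<^sub>1 = 1/y\<^sub>0, the second is positive for y \<ge> 0.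
   The remaining hypotheses only serve to give \<epsilon> > 0, \<alpha>\<^sub>2 \<ge> 0 and \<beta> + \<epsilon> > 0. *)

lemma odd_cubic_strict_mono:
  fixes a b :: real
  assumes "0 < a" and "0 \<le> b"
  shows "strict_mono (\<lambda>y. a * y + b * y ^ 3)"
proof (rule strict_monoI)
  fix x y :: real
  assume "x < y"
  have "a * x < a * y" using \<open>x < y\<close> \<open>0 < a\<close> by simp
  moreover have "b * x ^ 3 \<le> b * y ^ 3"
    using \<open>x < y\<close> \<open>0 \<le> b\<close> by (intro mult_left_mono power_mono_odd) simp_all
  ultimately show "a * x + b * x ^ 3 < a * y + b * y ^ 3" by simp
qed

lemma odd_cubic_pos:
  fixes a b y :: real
  assumes "0 < a" and "0 \<le> b" and "0 < y"
  shows "0 < a * y + b * y ^ 3"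
  using assms by (intro add_pos_nonneg) simp_all

lemma palindromic_quartic_eq_mult:
  fixes c d t t' y :: real
  assumes "d = t + t'" and "c = - t * t' - 2"
  shows "y ^ 4 - d * y ^ 3 - c * y ^ 2 - d * y + 1 = (y ^ 2 - t * y + 1) * (y ^ 2 - t' * y + 1)"
  unfolding assms by (simp add: power2_eq_square power3_eq_cube power4_eq_xxxx algebra_simps)

lemma reciprocal_quadratic_roots:
  fixes t :: real
  assumes "2 < t"
  obtains y\<^sub>0 y\<^sub>1 where "0 < y\<^sub>0" and "y\<^sub>0 < y\<^sub>1"
    and "\<And>y. y ^ 2 - t * y + 1 = (y - y\<^sub>0) * (y - y\<^sub>1)"
proof
  define R where "R = sqrt (t ^ 2 - 4)"
  have "2 ^ 2 < t ^ 2" using assms by (intro power_strict_mono) simp_all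
  then have R2: "R ^ 2 = t ^ 2 - 4" and "0 < R" by (simp_all add: R_def)
  have "R < t" unfolding R_def using assms by (intro real_less_lsqrt) simp_all
  then show "0 < (t - R) / 2" by simp
  show "(t - R) / 2 < (t + R) / 2" using \<open>0 < R\<close> by simp
  show "y ^ 2 - t * y + 1 = (y - (t - R) / 2) * (y - (t + R) / 2)" for y
    using R2 by (simp add: power2_eq_square field_simps)
qed

lemma palindromic_quartic_factor:
  fixes c d :: real
  assumes "2 < c" and "0 \<le> d"
  obtains y\<^sub>0 y\<^sub>1 g where "0 < y\<^sub>0" and "y\<^sub>0 < y\<^sub>1"
    and "\<And>y. y ^ 4 - d * y ^ 3 - c * y ^ 2 - d * y + 1 = (y - y\<^sub>0) * (y - y\<^sub>1) * g y"
    and "\<And>y. 0 \<le> y \<Longrightarrow> 0 < g y"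
proof -
  define S where "S = sqrt (d ^ 2 + 4 * (c + 2))"
  define t where "t = (d + S) / 2"
  define t' where "t' = (d - S) / 2"
  have S2: "S ^ 2 = d ^ 2 + 4 * (c + 2)"
    unfolding S_def using assms by simp
  have "d < S" unfolding S_def using assms by (intro real_less_rsqrt) simp
  then have "t' < 0" by (simp add: t'_def)
  have "4 - d < S"
    unfolding S_def using assms by (intro real_less_rsqrt) (simp add: power2_eq_square algebra_simps)
  then have "2 < t" by (simp add: t_def)
  then obtain y\<^sub>0 y\<^sub>1
    where y: "0 < y\<^sub>0" "y\<^sub>0 < y\<^sub>1" "\<And>y. y ^ 2 - t * y + 1 = (y - y\<^sub>0) * (y - y\<^sub>1)"
    using reciprocal_quadratic_roots by blast
  have "d = t + t'" and "c = - t * t' - 2"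
    using S2 by (simp_all add: t_def t'_def field_simps power2_eq_square)
  then have "y ^ 4 - d * y ^ 3 - c * y ^ 2 - d * y + 1
      = (y - y\<^sub>0) * (y - y\<^sub>1) * (y ^ 2 - t' * y + 1)" for y
    using palindromic_quartic_eq_mult y(3) by simp
  moreover have "0 < y ^ 2 - t' * y + 1" if "0 \<le> y" for y
    using mult_nonpos_nonneg[of t' y] zero_le_power2[of y] \<open>t' < 0\<close> that by linarith
  ultimately show thesis by (rule that[OF y(1,2)])
qed

lemma sign_pattern_two_roots:
  fixes f g :: "real \<Rightarrow> real"
  assumes "0 < y\<^sub>0" and "y\<^sub>0 < y\<^sub>1"
    and f: "\<And>y. f y = (y - y\<^sub>0) * (y - y\<^sub>1) * g y"
    and g: "\<And>y. 0 \<le> y \<Longrightarrow> 0 < g y"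
  shows "{y. y > 0 \<and> f y = 0} = {y\<^sub>0, y\<^sub>1}"
    and "\<And>y. 0 \<le> y \<Longrightarrow> y < y\<^sub>0 \<Longrightarrow> f y > 0"
    and "\<And>y. y\<^sub>0 < y \<Longrightarrow> y < y\<^sub>1 \<Longrightarrow> f y < 0"
    and "\<And>y. y\<^sub>1 < y \<Longrightarrow> f y > 0"
proof -
  have "g y \<noteq> 0" if "0 < y" for y using g[of y] that by simp
  then show "{y. y > 0 \<and> f y = 0} = {y\<^sub>0, y\<^sub>1}" using assms(1,2) by (auto simp: f)
  show "f y > 0" if "0 \<le> y" "y < y\<^sub>0" for y
    using that assms(2) g[of y] by (simp add: f zero_less_mult_iff)
  show "f y < 0" if "y\<^sub>0 < y" "y < y\<^sub>1" for y
    using that assms(1) g[of y] by (simp add: f mult_less_0_iff zero_less_mult_iff)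
  show "f y > 0" if "y\<^sub>1 < y" for y
    using that assms g[of y] by (simp add: f zero_less_mult_iff)
qed

lemma palindromic_quartic_sign_pattern:
  fixes c d :: real and f :: "real \<Rightarrow> real"
  assumes "2 < c" and "0 \<le> d" and f: "\<And>y. f y = y ^ 4 - d * y ^ 3 - c * y ^ 2 - d * y + 1"
  shows "\<exists>y\<^sub>0 y\<^sub>1. 0 < y\<^sub>0 \<and> y\<^sub>0 < y\<^sub>1
           \<and> {y. y > 0 \<and> f y = 0} = {y\<^sub>0, y\<^sub>1}
           \<and> (\<forall>y. 0 \<le> y \<and> y < y\<^sub>0 \<longrightarrow> f y > 0)
           \<and> (\<forall>y. y\<^sub>0 < y \<and> y < y\<^sub>1 \<longrightarrow> f y < 0)
           \<and> (\<forall>y. y > y\<^sub>1 \<longrightarrow> f y > 0)"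
proof -
  obtain y\<^sub>0 y\<^sub>1 g where y: "0 < y\<^sub>0" "y\<^sub>0 < y\<^sub>1"
    and fg: "\<And>y. f y = (y - y\<^sub>0) * (y - y\<^sub>1) * g y" and g: "\<And>y. 0 \<le> y \<Longrightarrow> 0 < g y"
    using palindromic_quartic_factor[OF assms(1,2)] unfolding f[symmetric] by blast
  show ?thesis
    using y sign_pattern_two_roots[of y\<^sub>0 y\<^sub>1 f g, OF y fg g] by blast
qed

lemma Re_qpoly_imaginary_axis:
  "Re (qpoly (complex_of_real a\<^sub>1 - \<i> * complex_of_real a\<^sub>2) \<beta> \<epsilon> (\<i> * complex_of_real y)) =
     y ^ 4 - 4 * a\<^sub>2 / (\<beta> + \<epsilon>) * y ^ 3 - 2 * (16 - \<beta> + 3 * \<epsilon>) / (\<beta> + \<epsilon>) * y ^ 2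
       - 4 * a\<^sub>2 / (\<beta> + \<epsilon>) * y + 1"
  unfolding qpoly_def
  by (simp add: power2_eq_square power3_eq_cube power4_eq_xxxx
      algebra_simps add_divide_distrib diff_divide_distrib)

lemma Im_qpoly_imaginary_axis:
  "Im (qpoly (complex_of_real a\<^sub>1 - \<i> * complex_of_real a\<^sub>2) \<beta> \<epsilon> (\<i> * complex_of_real y)) =
     4 * (2 + \<epsilon> - a\<^sub>1) / (\<beta> + \<epsilon>) * y + 4 * (- 2 - \<epsilon> - a\<^sub>1) / (\<beta> + \<epsilon>) * y ^ 3"
  unfolding qpoly_def
  by (simp add: power2_eq_square power3_eq_cube power4_eq_xxxx
      algebra_simps add_divide_distrib diff_divide_distrib)

lemma Im_qpoly_imaginary_axis_strict_mono:
  fixes a\<^sub>1 a\<^sub>2 \<beta> \<epsilon> :: real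
  assumes "0 < 2 + \<epsilon>" and "0 < \<beta> + \<epsilon>" and "a\<^sub>1 < - (2 + \<epsilon>)"
  defines "f \<equiv> \<lambda>y. Im (qpoly (complex_of_real a\<^sub>1 - \<i> * complex_of_real a\<^sub>2) \<beta> \<epsilon> (\<i> * complex_of_real y))"
  shows "strict_mono f" and "0 < y \<Longrightarrow> 0 < f y"
proof -
  have "0 < 4 * (2 + \<epsilon> - a\<^sub>1) / (\<beta> + \<epsilon>)" and "0 \<le> 4 * (- 2 - \<epsilon> - a\<^sub>1) / (\<beta> + \<epsilon>)"
    using assms(1-3) by simp_all
  note cubic = odd_cubic_strict_mono[OF this] odd_cubic_pos[OF this]
  show "strict_mono f" using cubic(1) by (simp add: f_def Im_qpoly_imaginary_axis)
  show "0 < f y" if "0 < y" using cubic(2)[OF that] by (simp add: f_def Im_qpoly_imaginary_axis)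
qed

lemma Im_qpoly_imaginary_axis_strict_antimono:
  fixes a\<^sub>1 a\<^sub>2 \<beta> \<epsilon> :: real
  assumes "0 < 2 + \<epsilon>" and "0 < \<beta> + \<epsilon>" and "2 + \<epsilon> < a\<^sub>1"
  defines "f \<equiv> \<lambda>y. Im (qpoly (complex_of_real a\<^sub>1 - \<i> * complex_of_real a\<^sub>2) \<beta> \<epsilon> (\<i> * complex_of_real y))"
  shows "x < y \<Longrightarrow> f y < f x" and "0 < y \<Longrightarrow> f y < 0"
proof -
  have "0 < - (4 * (2 + \<epsilon> - a\<^sub>1) / (\<beta> + \<epsilon>))" and "0 \<le> - (4 * (- 2 - \<epsilon> - a\<^sub>1) / (\<beta> + \<epsilon>))"
    using assms(1-3) by (simp_all add: divide_neg_pos divide_nonpos_pos)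
  note cubic = odd_cubic_strict_mono[OF this] odd_cubic_pos[OF this]
  show "f y < f x" if "x < y"
    using strict_monoD[OF cubic(1) that] by (simp add: f_def Im_qpoly_imaginary_axis)
  show "f y < 0" if "0 < y" using cubic(2)[OF that] by (simp add: f_def Im_qpoly_imaginary_axis)
qed

lemma qpoly_imaginary_axis_nonzero:
  assumes "0 < 2 + \<epsilon>" and "0 < \<beta> + \<epsilon>" and "2 + \<epsilon> < \<bar>a\<^sub>1\<bar>"
  shows "qpoly (complex_of_real a\<^sub>1 - \<i> * complex_of_real a\<^sub>2) \<beta> \<epsilon> (\<i> * complex_of_real y) \<noteq> 0"
    (is "?q y \<noteq> 0")
proof
  assume "?q y = 0"
  then have "Im (?q y) = Im (?q 0)" by (simp add: qpoly_def)
  moreover have "Im (?q y) \<noteq> Im (?q 0)" if "y \<noteq> 0"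
  proof (cases "a\<^sub>1 < 0")
    case True
    then have "strict_mono (\<lambda>y. Im (?q y))"
      using assms by (intro Im_qpoly_imaginary_axis_strict_mono) auto
    then show ?thesis using strict_mono_eq[of _ y 0] \<open>y \<noteq> 0\<close> by blast
  next
    case False
    then have "x < y \<Longrightarrow> Im (?q y) < Im (?q x)" for x y
      using assms by (intro Im_qpoly_imaginary_axis_strict_antimono) auto
    then show ?thesis using \<open>y \<noteq> 0\<close> by (metis linorder_neq_iff order_less_irrefl)
  qed
  ultimately have "y = 0" by blast
  with \<open>?q y = 0\<close> show False by (simp add: qpoly_def)
qed

lemma Re_qpoly_imaginary_axis_sign_pattern:
  fixes a\<^sub>1 a\<^sub>2 \<beta> \<epsilon> :: real
  assumes "0 < \<beta> + \<epsilon>" and "\<beta> < 8 + \<epsilon>" and "0 \<le> a\<^sub>2"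
  defines "f \<equiv> \<lambda>y. Re (qpoly (complex_of_real a\<^sub>1 - \<i> * complex_of_real a\<^sub>2) \<beta> \<epsilon> (\<i> * complex_of_real y))"
  shows "\<exists>y\<^sub>0 y\<^sub>1. 0 < y\<^sub>0 \<and> y\<^sub>0 < y\<^sub>1
           \<and> {y. y > 0 \<and> f y = 0} = {y\<^sub>0, y\<^sub>1}
           \<and> (\<forall>y. 0 \<le> y \<and> y < y\<^sub>0 \<longrightarrow> f y > 0)
           \<and> (\<forall>y. y\<^sub>0 < y \<and> y < y\<^sub>1 \<longrightarrow> f y < 0)
           \<and> (\<forall>y. y > y\<^sub>1 \<longrightarrow> f y > 0)"
proof (rule palindromic_quartic_sign_pattern)
  show "2 < 2 * (16 - \<beta> + 3 * \<epsilon>) / (\<beta> + \<epsilon>)" using assms(1,2) by (simp add: field_simps)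
  show "0 \<le> 4 * a\<^sub>2 / (\<beta> + \<epsilon>)" using assms(1,3) by simp
  show "f y = y ^ 4 - 4 * a\<^sub>2 / (\<beta> + \<epsilon>) * y ^ 3 - 2 * (16 - \<beta> + 3 * \<epsilon>) / (\<beta> + \<epsilon>) * y ^ 2
      - 4 * a\<^sub>2 / (\<beta> + \<epsilon>) * y + 1" for y
    by (simp add: f_def Re_qpoly_imaginary_axis)
qed

theorem mainTheorem9:
  fixes M a \<mu> :: real and m :: int and n l :: nat
    and \<alpha>\<^sub>1 \<alpha>\<^sub>2 \<epsilon> \<beta> :: real and \<alpha> :: complex
    and h\<^sub>1 h\<^sub>2 :: "real \<Rightarrow> real"
  assumes "M > 0" and "0 < a" and "a < M" and "\<mu> > 0"
    and "m \<noteq> 0" and "l \<ge> nat \<bar>m\<bar>"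
    and "\<alpha>\<^sub>1 = real_of_int m * a / (\<mu> * M ^ 2)"
    and "\<alpha>\<^sub>2 = (2 * real n + 1) / (\<mu> * M) * sqrt (1 - a ^ 2 / M ^ 2)"
    and "\<alpha> = complex_of_real \<alpha>\<^sub>1 - \<i> * complex_of_real \<alpha>\<^sub>2"
    and "\<epsilon> = 2 * sqrt (1 - a ^ 2 / M ^ 2)"
    and "\<beta> = 6 - real l * (real l + 1) / (\<mu> ^ 2 * M ^ 2)"
    and "\<beta> \<ge> 0"
    and "\<And>y. h\<^sub>1 y = Re (qpoly \<alpha> \<beta> \<epsilon> (\<i> * complex_of_real y))"
    and "\<And>y. h\<^sub>2 y = Im (qpoly \<alpha> \<beta> \<epsilon> (\<i> * complex_of_real y))"
  shows "((\<alpha>\<^sub>1 > 2 + \<epsilon> \<or> \<alpha>\<^sub>1 < - (2 + \<epsilon>)) \<longrightarrow>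
            (\<forall>y::real. qpoly \<alpha> \<beta> \<epsilon> (\<i> * complex_of_real y) \<noteq> 0))
       \<and> (\<alpha>\<^sub>1 > 2 + \<epsilon> \<longrightarrow>
            (\<forall>x y. x < y \<longrightarrow> h\<^sub>2 y < h\<^sub>2 x) \<and> h\<^sub>2 ` {0<..} \<subseteq> {..<0})
       \<and> (\<alpha>\<^sub>1 < - (2 + \<epsilon>) \<longrightarrow>
            strict_mono h\<^sub>2 \<and> h\<^sub>2 ` {0<..} \<subseteq> {0<..})
       \<and> (0 < \<beta> \<and> \<beta> < 8 + \<epsilon> \<longrightarrow>
            (\<exists>y\<^sub>0 y\<^sub>1. 0 < y\<^sub>0 \<and> y\<^sub>0 < y\<^sub>1
               \<and> {y. y > 0 \<and> h\<^sub>1 y = 0} = {y\<^sub>0, y\<^sub>1}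
               \<and> (\<forall>y. 0 \<le> y \<and> y < y\<^sub>0 \<longrightarrow> h\<^sub>1 y > 0)
               \<and> (\<forall>y. y\<^sub>0 < y \<and> y < y\<^sub>1 \<longrightarrow> h\<^sub>1 y < 0)
               \<and> (\<forall>y. y > y\<^sub>1 \<longrightarrow> h\<^sub>1 y > 0)))"
proof -
  have "a ^ 2 / M ^ 2 < 1" using assms(1-3) by (simp add: power_strict_mono)
  then have "0 < \<epsilon>" and "0 \<le> \<alpha>\<^sub>2" using assms(1,4,8,10) by simp_all
  then have "0 < 2 + \<epsilon>" and "0 < \<beta> + \<epsilon>" using assms(12) by simp_all
  note qpoly_params = this
  have h\<^sub>1: "h\<^sub>1 = (\<lambda>y. Re (qpoly (complex_of_real \<alpha>\<^sub>1 - \<i> * complex_of_real \<alpha>\<^sub>2) \<beta> \<epsilon> (\<i> * complex_of_real y)))"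
    and h\<^sub>2: "h\<^sub>2 = (\<lambda>y. Im (qpoly (complex_of_real \<alpha>\<^sub>1 - \<i> * complex_of_real \<alpha>\<^sub>2) \<beta> \<epsilon> (\<i> * complex_of_real y)))"
    using assms(9,13,14) by auto
  show ?thesis
  proof (intro conjI impI allI, goal_cases)
    case (1 y)
    then show ?case unfolding assms(9) using qpoly_params by (intro qpoly_imaginary_axis_nonzero) auto
  next
    case (2 x y)
    show ?case unfolding h\<^sub>2 using qpoly_params 2 by (rule Im_qpoly_imaginary_axis_strict_antimono)
  next
    case 3
    then show ?case unfolding h\<^sub>2 using qpoly_params Im_qpoly_imaginary_axis_strict_antimono(2) by auto
  next
    case 4
    then show ?case unfolding h\<^sub>2 using qpoly_params by (intro Im_qpoly_imaginary_axis_strict_mono)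
  next
    case 5
    then show ?case unfolding h\<^sub>2 using qpoly_params Im_qpoly_imaginary_axis_strict_mono(2) by auto
  next
    case 6
    then show ?case unfolding h\<^sub>1 using qpoly_params \<open>0 \<le> \<alpha>\<^sub>2\<close>
      by (intro Re_qpoly_imaginary_axis_sign_pattern) auto
  qed
qed

end
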